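(* Let $R$ be a ring and $A$ an $R$-module with $\mathrm{sr}_R(A)$ finite. Let $B\subseteq C$ be $R$-submodules of $A$. Then (i) $\mathrm{sr}_R(B)\le\mathrm{sr}_R(C)\le\mathrm{sr}_R(A)$; (ii) $\mathrm{sr}_R(C/B)\le\mathrm{sr}_R(A/B)\le\mathrm{sr}_R(A)$.
   Context: A generating subset of an $R$-submodule is minimal if no proper subset of it generates that submodule. An $R$-module $M$ has special rank $\mathrm{sr}_R(M)=r$ if every finitely generated $R$-submodule of $M$ can be generated by $r$ elements and some finitely generated $R$-submodule of $M$ has a minimal generating subset of exactly $r$ elements. *)

theory Defs
  imports Main "HOL-Library.Extended_Nat"
begin

text \<open>Left modules over a ring with identity (scalars form the type 'r),
  given by an explicit carrier so that submodules and quotients are modules too.\<close>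

record ('r, 'm) lmod =
  mcarrier :: "'m set"
  madd :: "'m \<Rightarrow> 'm \<Rightarrow> 'm"
  mzero :: 'm
  msmult :: "'r \<Rightarrow> 'm \<Rightarrow> 'm"

definition left_module :: "('r::ring_1, 'm) lmod \<Rightarrow> bool" where
  "left_module M \<longleftrightarrow>
     mzero M \<in> mcarrier M \<and>
     (\<forall>x\<in>mcarrier M. \<forall>y\<in>mcarrier M. madd M x y \<in> mcarrier M) \<and>
     (\<forall>r. \<forall>x\<in>mcarrier M. msmult M r x \<in> mcarrier M) \<and>
     (\<forall>x\<in>mcarrier M. \<forall>y\<in>mcarrier M. \<forall>z\<in>mcarrier M.
        madd M (madd M x y) z = madd M x (madd M y z)) \<and>
     (\<forall>x\<in>mcarrier M. \<forall>y\<in>mcarrier M. madd M x y = madd M y x) \<and>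
     (\<forall>x\<in>mcarrier M. madd M (mzero M) x = x) \<and>
     (\<forall>x\<in>mcarrier M. \<exists>y\<in>mcarrier M. madd M x y = mzero M) \<and>
     (\<forall>r. \<forall>x\<in>mcarrier M. \<forall>y\<in>mcarrier M.
        msmult M r (madd M x y) = madd M (msmult M r x) (msmult M r y)) \<and>
     (\<forall>r s. \<forall>x\<in>mcarrier M. msmult M (r + s) x = madd M (msmult M r x) (msmult M s x)) \<and>
     (\<forall>r s. \<forall>x\<in>mcarrier M. msmult M (r * s) x = msmult M r (msmult M s x)) \<and>
     (\<forall>x\<in>mcarrier M. msmult M 1 x = x)"

definition submodule :: "('r::ring_1, 'm) lmod \<Rightarrow> 'm set \<Rightarrow> bool" where
  "submodule M N \<longleftrightarrow> N \<subseteq> mcarrier M \<and> mzero M \<in> N \<and>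
     (\<forall>x\<in>N. \<forall>y\<in>N. madd M x y \<in> N) \<and> (\<forall>r. \<forall>x\<in>N. msmult M r x \<in> N)"

definition subm :: "('r, 'm) lmod \<Rightarrow> 'm set \<Rightarrow> ('r, 'm) lmod" where
  "subm M N = M\<lparr>mcarrier := N\<rparr>"

definition mcoset :: "('r, 'm) lmod \<Rightarrow> 'm set \<Rightarrow> 'm \<Rightarrow> 'm set" where
  "mcoset M N x = {madd M x b | b. b \<in> N}"

definition quot :: "('r, 'm) lmod \<Rightarrow> 'm set \<Rightarrow> ('r, 'm set) lmod" where
  "quot M N = \<lparr> mcarrier = mcoset M N ` mcarrier M,
                madd = (\<lambda>X Y. {madd M x y | x y. x \<in> X \<and> y \<in> Y}),
                mzero = N,
                msmult = (\<lambda>r X. {madd M (msmult M r x) b | x b. x \<in> X \<and> b \<in> N}) \<rparr>"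

inductive_set gen :: "('r, 'm) lmod \<Rightarrow> 'm set \<Rightarrow> 'm set" for M S where
  gen_zero: "mzero M \<in> gen M S"
| gen_base: "x \<in> S \<Longrightarrow> x \<in> gen M S"
| gen_add: "x \<in> gen M S \<Longrightarrow> y \<in> gen M S \<Longrightarrow> madd M x y \<in> gen M S"
| gen_smult: "x \<in> gen M S \<Longrightarrow> msmult M r x \<in> gen M S"

definition minimal_gen :: "('r, 'm) lmod \<Rightarrow> 'm set \<Rightarrow> 'm set \<Rightarrow> bool" where
  "minimal_gen M G N \<longleftrightarrow> G \<subseteq> N \<and> gen M G = N \<and> (\<forall>H. H \<subset> G \<longrightarrow> gen M H \<noteq> N)"

definition has_sr :: "('r, 'm) lmod \<Rightarrow> nat \<Rightarrow> bool" where
  "has_sr M r \<longleftrightarrow>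
     (\<forall>S. finite S \<and> S \<subseteq> mcarrier M \<longrightarrow>
        (\<exists>G. finite G \<and> card G \<le> r \<and> G \<subseteq> gen M S \<and> gen M G = gen M S)) \<and>
     (\<exists>S G. finite S \<and> S \<subseteq> mcarrier M \<and> minimal_gen M G (gen M S) \<and>
        finite G \<and> card G = r)"

definition sr :: "('r, 'm) lmod \<Rightarrow> enat" where
  "sr M = (if \<exists>r. has_sr M r then enat (LEAST r. has_sr M r) else \<infinity>)"

end

theory Submission
  imports Defs
begin

text \<open>The special rank is the least r such that every finitely generated submodule is
  generated by r elements: for that least r > 0 some finitely generated submodule is not
  generated by r - 1 elements, so any r-element generating set of it is minimal.
  Such a bound r passes to submodules, because generation does not depend on the carrier,
  and to homomorphic images, because the images of generators generate the image; the
  quotient A/B is the image of A under the coset map, and C/B is a submodule of A/B.\<close>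

definition gen_bounded :: "('r, 'm) lmod \<Rightarrow> nat \<Rightarrow> bool" where
  "gen_bounded M r \<longleftrightarrow> (\<forall>S. finite S \<and> S \<subseteq> mcarrier M \<longrightarrow>
     (\<exists>G. finite G \<and> card G \<le> r \<and> G \<subseteq> gen M S \<and> gen M G = gen M S))"

lemma gen_bounded_mono: "gen_bounded M r \<Longrightarrow> r \<le> s \<Longrightarrow> gen_bounded M s"
  unfolding gen_bounded_def by (meson order_trans)

lemma has_sr_imp_gen_bounded: "has_sr M r \<Longrightarrow> gen_bounded M r"
  unfolding has_sr_def gen_bounded_def by blast

lemma has_sr_Least_gen_bounded:
  assumes "gen_bounded M r"
  shows "has_sr M (LEAST r. gen_bounded M r)"
proof -
  define d where "d = (LEAST r. gen_bounded M r)"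
  have bounded: "gen_bounded M d"
    unfolding d_def using assms by (rule LeastI)
  have "\<exists>S G. finite S \<and> S \<subseteq> mcarrier M \<and> minimal_gen M G (gen M S) \<and> finite G \<and> card G = d"
  proof (cases "d = 0")
    case True
    have "minimal_gen M {} (gen M {})"
      unfolding minimal_gen_def by auto
    with True show ?thesis
      by (metis card.empty empty_subsetI finite.emptyI)
  next
    case False
    have "\<not> gen_bounded M (d - 1)"
    proof
      assume "gen_bounded M (d - 1)"
      then have "d \<le> d - 1"
        unfolding d_def by (rule Least_le)
      with False show False by simp
    qed
    then obtain S where S: "finite S" "S \<subseteq> mcarrier M"
      and no_smaller: "\<nexists>G. finite G \<and> card G \<le> d - 1 \<and> G \<subseteq> gen M S \<and> gen M G = gen M S"
      unfolding gen_bounded_def by meson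
    from bounded S obtain G where G: "finite G" "card G \<le> d" "G \<subseteq> gen M S" "gen M G = gen M S"
      unfolding gen_bounded_def by meson
    have card_G: "card G = d"
    proof (rule ccontr)
      assume "card G \<noteq> d"
      with G(2) have "card G \<le> d - 1" by simp
      with G no_smaller show False by blast
    qed
    have "minimal_gen M G (gen M S)"
      unfolding minimal_gen_def
    proof (intro conjI allI impI G(3,4))
      fix H assume "H \<subset> G"
      then have "finite H" "card H \<le> d - 1" "H \<subseteq> gen M S"
        using G(1,3) card_G psubset_card_mono[of G H] by (auto intro: finite_subset)
      with no_smaller show "gen M H \<noteq> gen M S" by blast
    qed
    with S G(1) card_G show ?thesis by blast
  qed
  with bounded show ?thesis
    unfolding has_sr_def d_def gen_bounded_def by blast
qed

lemma sr_eq_Least: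
  "sr M = (if \<exists>r. gen_bounded M r then enat (LEAST r. gen_bounded M r) else \<infinity>)"
proof (cases "\<exists>r. gen_bounded M r")
  case True
  then have has_sr_Least: "has_sr M (LEAST r. gen_bounded M r)"
    using has_sr_Least_gen_bounded by blast
  have "(LEAST r. has_sr M r) = (LEAST r. gen_bounded M r)"
  proof (rule Least_equality)
    show "has_sr M (LEAST r. gen_bounded M r)" by (rule has_sr_Least)
  qed (intro Least_le has_sr_imp_gen_bounded)
  with True has_sr_Least show ?thesis
    unfolding sr_def by auto
next
  case False
  then show ?thesis
    unfolding sr_def using has_sr_imp_gen_bounded by auto
qed

lemma sr_le_enat_iff: "sr M \<le> enat r \<longleftrightarrow> gen_bounded M r"
proof
  assume "sr M \<le> enat r"
  then have ex: "\<exists>r. gen_bounded M r" and le: "(LEAST r. gen_bounded M r) \<le> r"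
    unfolding sr_eq_Least by (auto split: if_splits)
  show "gen_bounded M r"
    using gen_bounded_mono[OF LeastI_ex[OF ex] le] .
next
  assume "gen_bounded M r"
  then show "sr M \<le> enat r"
    unfolding sr_eq_Least by (auto intro: Least_le)
qed

lemma sr_mono:
  assumes "\<And>r. gen_bounded M' r \<Longrightarrow> gen_bounded M r"
  shows "sr M \<le> sr M'"
proof (cases "sr M'")
  case (enat r)
  then have "gen_bounded M' r"
    using sr_le_enat_iff[of M' r] by simp
  with enat assms show ?thesis
    using sr_le_enat_iff[of M r] by simp
qed simp

lemma gen_subm [simp]: "gen (subm M N) S = gen M S"
proof -
  have gen_transfer: "x \<in> gen M' S" if "x \<in> gen M S" and "madd M = madd M'"
    "mzero M = mzero M'" "msmult M = msmult M'" for M M' x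
    using that by (induction rule: gen.induct) (auto intro: gen.intros)
  show ?thesis
    using gen_transfer[of _ "subm M N" M] gen_transfer[of _ M "subm M N"]
    by (auto simp: subm_def)
qed

lemma mcarrier_subm [simp]: "mcarrier (subm M N) = N"
  by (simp add: subm_def)

lemma subm_subm [simp]: "subm (subm M N) N' = subm M N'"
  by (simp add: subm_def)

lemma sr_subm_le:
  assumes "N \<subseteq> mcarrier M"
  shows "sr (subm M N) \<le> sr M"
  by (rule sr_mono) (use assms in \<open>auto simp: gen_bounded_def\<close>)

lemma submoduleD:
  assumes "submodule M N"
  shows "N \<subseteq> mcarrier M" "mzero M \<in> N"
    and "x \<in> N \<Longrightarrow> y \<in> N \<Longrightarrow> madd M x y \<in> N" "x \<in> N \<Longrightarrow> msmult M r x \<in> N"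
  using assms unfolding submodule_def by blast+

definition module_hom :: "('r, 'm) lmod \<Rightarrow> ('r, 'n) lmod \<Rightarrow> ('m \<Rightarrow> 'n) \<Rightarrow> bool" where
  "module_hom M N f \<longleftrightarrow> f ` mcarrier M \<subseteq> mcarrier N \<and> f (mzero M) = mzero N \<and>
     (\<forall>x\<in>mcarrier M. \<forall>y\<in>mcarrier M. f (madd M x y) = madd N (f x) (f y)) \<and>
     (\<forall>r. \<forall>x\<in>mcarrier M. f (msmult M r x) = msmult N r (f x))"

context
  fixes M :: "('r::ring_1, 'm) lmod"
  assumes M: "left_module M"
begin

lemma mzero_closed: "mzero M \<in> mcarrier M"
  using M unfolding left_module_def by auto

lemma madd_closed: "x \<in> mcarrier M \<Longrightarrow> y \<in> mcarrier M \<Longrightarrow> madd M x y \<in> mcarrier M"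
  using M unfolding left_module_def by auto

lemma msmult_closed: "x \<in> mcarrier M \<Longrightarrow> msmult M r x \<in> mcarrier M"
  using M unfolding left_module_def by auto

lemma madd_assoc: "x \<in> mcarrier M \<Longrightarrow> y \<in> mcarrier M \<Longrightarrow> z \<in> mcarrier M \<Longrightarrow>
    madd M (madd M x y) z = madd M x (madd M y z)"
  using M unfolding left_module_def by auto

lemma madd_comm: "x \<in> mcarrier M \<Longrightarrow> y \<in> mcarrier M \<Longrightarrow> madd M x y = madd M y x"
  using M unfolding left_module_def by auto

lemma madd_zero_left: "x \<in> mcarrier M \<Longrightarrow> madd M (mzero M) x = x"
  using M unfolding left_module_def by auto

lemma msmult_madd_distrib: "x \<in> mcarrier M \<Longrightarrow> y \<in> mcarrier M \<Longrightarrow>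
    msmult M r (madd M x y) = madd M (msmult M r x) (msmult M r y)"
  using M unfolding left_module_def by auto

lemma madd_zero_right: "x \<in> mcarrier M \<Longrightarrow> madd M x (mzero M) = x"
  using madd_comm[OF _ mzero_closed] madd_zero_left by simp

lemma madd_madd_swap:
  assumes "x \<in> mcarrier M" "y \<in> mcarrier M" "z \<in> mcarrier M" "w \<in> mcarrier M"
  shows "madd M (madd M x y) (madd M z w) = madd M (madd M x z) (madd M y w)"
proof -
  have "madd M (madd M x y) (madd M z w) = madd M x (madd M (madd M y z) w)"
    using assms by (simp add: madd_assoc madd_closed)
  also have "\<dots> = madd M x (madd M (madd M z y) w)"
    using assms madd_comm[of y z] by simp
  also have "\<dots> = madd M (madd M x z) (madd M y w)"
    using assms by (simp add: madd_assoc madd_closed)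
  finally show ?thesis .
qed

lemma gen_subset_carrier:
  assumes "S \<subseteq> mcarrier M"
  shows "gen M S \<subseteq> mcarrier M"
proof
  fix x assume "x \<in> gen M S"
  then show "x \<in> mcarrier M"
    by induction (use assms in \<open>auto intro: mzero_closed madd_closed msmult_closed\<close>)
qed

lemma gen_image:
  assumes f: "module_hom M N f" and T: "T \<subseteq> mcarrier M"
  shows "gen N (f ` T) = f ` gen M T"
proof
  have in_carrier: "x \<in> gen M T \<Longrightarrow> x \<in> mcarrier M" for x
    using gen_subset_carrier[OF T] by blast
  note hom = f[unfolded module_hom_def]
  show "f ` gen M T \<subseteq> gen N (f ` T)"
  proof clarify
    fix x assume "x \<in> gen M T"
    then show "f x \<in> gen N (f ` T)"
      by (induction rule: gen.induct) (auto simp: hom in_carrier intro: gen.intros)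
  qed
  show "gen N (f ` T) \<subseteq> f ` gen M T"
  proof
    fix X assume "X \<in> gen N (f ` T)"
    then show "X \<in> f ` gen M T"
    proof (induction rule: gen.induct)
      case gen_zero
      then show ?case
        using hom gen.gen_zero by (metis image_eqI)
    next
      case (gen_base X)
      then show ?case by (auto intro: gen.gen_base)
    next
      case (gen_add X Y)
      then obtain x y where "x \<in> gen M T" "y \<in> gen M T" "X = f x" "Y = f y"
        by blast
      moreover from this have "madd N X Y = f (madd M x y)"
        using hom in_carrier by simp
      ultimately show ?case
        by (metis gen.gen_add imageI)
    next
      case (gen_smult X r)
      then obtain x where "x \<in> gen M T" "X = f x"
        by blast
      moreover from this have "msmult N r X = f (msmult M r x)"
        using hom in_carrier by simp
      ultimately show ?case
        by (metis gen.gen_smult imageI)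
    qed
  qed
qed

lemma sr_hom_image_le:
  assumes f: "module_hom M N f" and onto: "f ` mcarrier M = mcarrier N"
  shows "sr N \<le> sr M"
proof (rule sr_mono)
  fix r assume bounded: "gen_bounded M r"
  show "gen_bounded N r"
    unfolding gen_bounded_def
  proof clarify
    fix S assume "finite S" "S \<subseteq> mcarrier N"
    then obtain T where T: "T \<subseteq> mcarrier M" "finite T" "S = f ` T"
      using onto finite_subset_image by metis
    with bounded obtain G where G: "finite G" "card G \<le> r" "G \<subseteq> gen M T" "gen M G = gen M T"
      unfolding gen_bounded_def by meson
    have "G \<subseteq> mcarrier M"
      using G(3) gen_subset_carrier[OF T(1)] by blast
    then have "finite (f ` G) \<and> card (f ` G) \<le> r \<and> f ` G \<subseteq> gen N S \<and> gen N (f ` G) = gen N S"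
      using G T gen_image[OF f] card_image_le[of G f] by auto
    then show "\<exists>G. finite G \<and> card G \<le> r \<and> G \<subseteq> gen N S \<and> gen N G = gen N S"
      by blast
  qed
qed

end

context
  fixes A :: "('r::ring_1, 'm) lmod" and B :: "'m set"
  assumes A: "left_module A" and B: "submodule A B"
begin

lemma mcoset_zero: "mcoset A B (mzero A) = B"
  using submoduleD(1,2)[OF B] madd_zero_left[OF A] unfolding mcoset_def by force

lemma mcoset_madd:
  assumes x: "x \<in> mcarrier A" and y: "y \<in> mcarrier A"
  shows "madd (quot A B) (mcoset A B x) (mcoset A B y) = mcoset A B (madd A x y)"
proof -
  note sub = submoduleD[OF B]
  have swap: "madd A (madd A x b) (madd A y b') = madd A (madd A x y) (madd A b b')"
    if "b \<in> B" "b' \<in> B" for b b'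
    using madd_madd_swap[OF A] x y that sub(1) by blast
  show ?thesis
  proof (rule set_eqI, rule iffI)
    fix z assume "z \<in> madd (quot A B) (mcoset A B x) (mcoset A B y)"
    then show "z \<in> mcoset A B (madd A x y)"
      using swap sub(3) by (auto simp: quot_def mcoset_def)
  next
    fix z assume "z \<in> mcoset A B (madd A x y)"
    then obtain b where "b \<in> B" "z = madd A (madd A x y) b"
      unfolding mcoset_def by blast
    then have "z = madd A (madd A x b) (madd A y (mzero A))"
      using swap[of b "mzero A"] sub madd_zero_right[OF A] by auto
    with \<open>b \<in> B\<close> sub(2) show "z \<in> madd (quot A B) (mcoset A B x) (mcoset A B y)"
      by (auto simp: quot_def mcoset_def)
  qed
qed

lemma mcoset_msmult:
  assumes x: "x \<in> mcarrier A"
  shows "msmult (quot A B) r (mcoset A B x) = mcoset A B (msmult A r x)"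
proof -
  note sub = submoduleD[OF B]
  have distrib: "madd A (msmult A r (madd A x b)) b' = madd A (msmult A r x) (madd A (msmult A r b) b')"
    if "b \<in> B" "b' \<in> B" for b b'
  proof -
    have "b \<in> mcarrier A" "b' \<in> mcarrier A"
      using that sub(1) by auto
    with x show ?thesis
      by (simp add: msmult_madd_distrib[OF A] madd_assoc[OF A] msmult_closed[OF A])
  qed
  show ?thesis
  proof (rule set_eqI, rule iffI)
    fix z assume "z \<in> msmult (quot A B) r (mcoset A B x)"
    then show "z \<in> mcoset A B (msmult A r x)"
      using distrib sub(3,4) by (auto simp: quot_def mcoset_def)
  next
    fix z assume "z \<in> mcoset A B (msmult A r x)"
    then obtain b where "b \<in> B" "z = madd A (msmult A r (madd A x (mzero A))) b"
      unfolding mcoset_def using madd_zero_right[OF A x] by auto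
    with sub(2) show "z \<in> msmult (quot A B) r (mcoset A B x)"
      by (auto simp: quot_def mcoset_def)
  qed
qed

lemma module_hom_mcoset: "module_hom A (quot A B) (mcoset A B)"
  unfolding module_hom_def
  by (simp add: mcoset_zero mcoset_madd mcoset_msmult) (simp add: quot_def)

lemma sr_quot_le: "sr (quot A B) \<le> sr A"
  by (rule sr_hom_image_le[OF A module_hom_mcoset]) (simp add: quot_def)

end

lemma quot_subm: "quot (subm A C) B = subm (quot A B) (mcoset A B ` C)"
  by (simp add: quot_def subm_def mcoset_def)

theorem lemma1:
  fixes A :: "('r::ring_1, 'm) lmod" and B C :: "'m set"
  assumes "left_module A"
    and "sr A \<noteq> \<infinity>"
    and "submodule A B" and "submodule A C" and "B \<subseteq> C"
  shows "sr (subm A B) \<le> sr (subm A C) \<and> sr (subm A C) \<le> sr A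
       \<and> sr (quot (subm A C) B) \<le> sr (quot A B) \<and> sr (quot A B) \<le> sr A"
proof (intro conjI)
  have C: "C \<subseteq> mcarrier A"
    using submoduleD(1)[OF assms(4)] .
  show "sr (subm A B) \<le> sr (subm A C)"
    using sr_subm_le[of B "subm A C"] assms(5) by simp
  show "sr (subm A C) \<le> sr A"
    using sr_subm_le[OF C] .
  show "sr (quot (subm A C) B) \<le> sr (quot A B)"
    unfolding quot_subm using C by (intro sr_subm_le) (auto simp: quot_def)
  show "sr (quot A B) \<le> sr A"
    using sr_quot_le[OF assms(1,3)] .
qed

end
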